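(* There is an absolute constant $c>0$ such that for every comparison-based search algorithm $A$ (deterministic or randomized) that takes a predicted distribution $\hat p$ on $[n]$ and a target key and locates the target among sorted keys $a_1<\dots<a_n$, and for every $n\ge1$, every $h\in[0,\log n]$ and every $\eta\in[1,n]$: the supremum of the expected number of comparisons made by $A$, taken over all instances $(p,\hat p)$ of distributions on $[n]$ with $H(p)\le h$ and earth mover's distance between $p$ and $\hat p$ at most $\eta$ (target $a=a_i$ drawn with probability $p_i$), is at least $c\,(h+\log\eta)$. In particular, the worst-case expected query complexity of any such algorithm is $\Omega(H(p)+\log\eta)$.
   Context: All logarithms are base 2. $H(p)=-\sum_i p_i\log p_i$ is the entropy. The earth mover's distance between distributions $P,Q$ on $[n]$ is $\inf_{\gamma\in\Pi(P,Q)}\mathbb{E}_{(x,y)\sim\gamma}|x-y|$, with $\Pi(P,Q)$ the set of couplings of $P$ and $Q$. A comparison of the target $a$ with a key $a_j$ returns whether $a<a_j$, $a=a_j$ or $a>a_j$ and counts as one query. (The paper combines its lower bound $\Omega(\log\eta)$ for instances with $H(p)=0$ with the known fact that any comparison-based search needs $\Omega(H(p))$ expected comparisons even when $\hat p=p$.) *)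

theory Defs
  imports "HOL-Probability.Probability"
begin

text \<open>Comparison decision trees over sorted keys a_1 < ... < a_n.
  A node Node j l e g compares the target a with the key a_j and continues
  in l, e or g according as a < a_j, a = a_j or a > a_j.
  Since the keys are sorted and the target is a = a_i, the comparison of a with a_j
  has the same outcome as comparing the indices i and j.\<close>

datatype dtree = Leaf nat | Node nat dtree dtree dtree

fun dt_output :: "dtree \<Rightarrow> nat \<Rightarrow> nat" where
  "dt_output (Leaf k) i = k"
| "dt_output (Node j l e g) i =
     (if i < j then dt_output l i else if i = j then dt_output e i else dt_output g i)"

fun dt_cost :: "dtree \<Rightarrow> nat \<Rightarrow> nat" where
  "dt_cost (Leaf k) i = 0"
| "dt_cost (Node j l e g) i =
     Suc (if i < j then dt_cost l i else if i = j then dt_cost e i else dt_cost g i)"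

text \<open>A (possibly randomized) comparison-based search algorithm for n keys maps the
  predicted distribution to a distribution over deterministic decision trees.\<close>
definition correct_search :: "nat \<Rightarrow> (nat pmf \<Rightarrow> dtree pmf) \<Rightarrow> bool" where
  "correct_search n A \<longleftrightarrow>
     (\<forall>q. set_pmf q \<subseteq> {1..n} \<longrightarrow>
        (\<forall>T \<in> set_pmf (A q). \<forall>i \<in> {1..n}. dt_output T i = i))"

definition expected_cost :: "(nat pmf \<Rightarrow> dtree pmf) \<Rightarrow> nat pmf \<Rightarrow> nat pmf \<Rightarrow> ennreal" where
  "expected_cost A p q =
     (\<integral>\<^sup>+ T. (\<integral>\<^sup>+ i. ennreal (real (dt_cost T i)) \<partial>measure_pmf p) \<partial>measure_pmf (A q))"

text \<open>Shannon entropy (base 2) of a distribution on [n]; note 0 * log 2 0 = 0.\<close>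
definition entropy2 :: "nat \<Rightarrow> nat pmf \<Rightarrow> real" where
  "entropy2 n p = - (\<Sum>i\<in>{1..n}. pmf p i * log 2 (pmf p i))"

definition couplings :: "nat pmf \<Rightarrow> nat pmf \<Rightarrow> (nat \<times> nat) pmf set" where
  "couplings P Q = {\<gamma>. map_pmf fst \<gamma> = P \<and> map_pmf snd \<gamma> = Q}"

definition emd :: "nat pmf \<Rightarrow> nat pmf \<Rightarrow> real" where
  "emd P Q = (INF \<gamma>\<in>couplings P Q.
      measure_pmf.expectation \<gamma> (\<lambda>(x, y). \<bar>real x - real y\<bar>))"

end

theory Submission
  imports Defs "HOL-Library.Log_Nat"
begin

text \<open>A comparison tree has three branches per node, so it resolves at most \<open>3 ^ d\<close> targets
  within \<open>d\<close> comparisons; hence a correct tree spends \<open>\<Omega>(k log k)\<close> comparisons in total on any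
  \<open>k\<close> targets. Two families of instances then force the bound. The uniform distribution on about
  \<open>2 ^ h\<close> keys with an exact prediction has entropy at most \<open>h\<close> and error \<open>0\<close>, and costs
  \<open>\<Omega>(h)\<close> on average. A point mass on one of about \<open>\<eta>\<close> keys, predicted as the uniform distribution on
  those keys, has entropy \<open>0\<close> and error below \<open>\<eta>\<close>; the prediction does not reveal which key is
  the target, so for some target the cost is \<open>\<Omega>(log \<eta>)\<close>.\<close>

lemma card_dt_cost_le_pow3:
  assumes "finite S" and "\<forall>i\<in>S. dt_output T i = i"
  shows "card {i\<in>S. dt_cost T i \<le> d} \<le> 3 ^ d"
  using assms
proof (induction T arbitrary: S d)
  case (Leaf k)
  have "{i\<in>S. dt_cost (Leaf k) i \<le> d} \<subseteq> {k}"
    using Leaf.prems by auto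
  then have "card {i\<in>S. dt_cost (Leaf k) i \<le> d} \<le> 1"
    using card_mono[of "{k}"] by fastforce
  then show ?case
    using one_le_power[of "3::nat" d] by linarith
next
  case (Node j l e g)
  show ?case
  proof (cases d)
    case 0
    then show ?thesis by simp
  next
    case (Suc d')
    let ?L = "{i\<in>{i\<in>S. i < j}. dt_cost l i \<le> d'}"
    let ?E = "{i\<in>{i\<in>S. i = j}. dt_cost e i \<le> d'}"
    let ?G = "{i\<in>{i\<in>S. j < i}. dt_cost g i \<le> d'}"
    have "{i\<in>S. dt_cost (Node j l e g) i \<le> d} \<subseteq> ?L \<union> ?E \<union> ?G"
      using Suc by (auto simp: not_less_iff_gr_or_eq)
    then have "card {i\<in>S. dt_cost (Node j l e g) i \<le> d} \<le> card (?L \<union> ?E \<union> ?G)"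
      using Node.prems(1) by (intro card_mono) auto
    also have "\<dots> \<le> card ?L + card ?E + card ?G"
      by (meson add_le_mono card_Un_le le_refl order_trans)
    also have "\<dots> \<le> 3 ^ d' + 3 ^ d' + 3 ^ d'"
    proof (intro add_mono)
      show "card ?L \<le> 3 ^ d'"
        by (rule Node.IH(1)) (use Node.prems in \<open>auto split: if_splits\<close>)
      show "card ?E \<le> 3 ^ d'"
        by (rule Node.IH(2)) (use Node.prems in \<open>auto split: if_splits\<close>)
      show "card ?G \<le> 3 ^ d'"
        by (rule Node.IH(3)) (use Node.prems in \<open>auto dest: less_not_sym split: if_splits\<close>)
    qed
    finally show ?thesis
      using Suc by simp
  qed
qed

lemma sum_dt_cost_ge:
  assumes "finite S" and "\<forall>i\<in>S. dt_output T i = i"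
  shows "(real (card S) - 3 ^ d) * (real d + 1) \<le> (\<Sum>i\<in>S. real (dt_cost T i))"
proof -
  let ?cheap = "{i\<in>S. dt_cost T i \<le> d}" and ?dear = "{i\<in>S. \<not> dt_cost T i \<le> d}"
  have "S = ?cheap \<union> ?dear"
    by blast
  then have "card S = card ?cheap + card ?dear"
    using assms(1) by (metis (no_types, lifting) card_Un_disjoint disjoint_iff finite_Un mem_Collect_eq)
  moreover have "real (card ?cheap) \<le> 3 ^ d"
    using card_dt_cost_le_pow3[OF assms, of d] by (simp flip: of_nat_le_iff)
  ultimately have "real (card S) - 3 ^ d \<le> real (card ?dear)"
    by simp
  then have "(real (card S) - 3 ^ d) * (real d + 1) \<le> (\<Sum>i\<in>?dear. real d + 1)"
    by (simp add: mult_right_mono)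
  also have "\<dots> \<le> (\<Sum>i\<in>?dear. real (dt_cost T i))"
    by (intro sum_mono) auto
  also have "\<dots> \<le> (\<Sum>i\<in>S. real (dt_cost T i))"
    using assms(1) by (intro sum_mono2) auto
  finally show ?thesis .
qed

lemma dt_cost_ge_1:
  assumes "\<forall>i\<in>{1..n}. dt_output T i = i" and "n \<ge> 2"
  shows "dt_cost T i \<ge> 1"
proof (cases T)
  case (Leaf k)
  have "dt_output T 1 = 1" "dt_output T 2 = 2"
    using assms by auto
  with Leaf show ?thesis by simp
qed simp

definition search_cost_bound :: "nat \<Rightarrow> real" where
  "search_cost_bound k = max 1 (log 2 (real k) / 6)"

lemma sum_dt_cost_ge_search_cost_bound:
  assumes "\<forall>i\<in>{1..n}. dt_output T i = i" and "n \<ge> 2"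
    and "S \<subseteq> {1..n}" and "S \<noteq> {}"
  shows "real (card S) * search_cost_bound (card S) \<le> (\<Sum>i\<in>S. real (dt_cost T i))"
proof -
  define k where "k = card S"
  have S: "finite S" "\<forall>i\<in>S. dt_output T i = i"
    using assms(1,3) finite_subset by auto
  then have "k > 0"
    using assms(4) by (simp add: k_def card_gt_0_iff)
  have "real k = (\<Sum>i\<in>S. 1)"
    by (simp add: k_def)
  also have "\<dots> \<le> (\<Sum>i\<in>S. real (dt_cost T i))"
    using dt_cost_ge_1[OF assms(1,2)] by (intro sum_mono) auto
  finally have at_least_k: "real k \<le> (\<Sum>i\<in>S. real (dt_cost T i))" .
  \<comment> \<open>With \<open>3 ^ Suc d \<le> k\<close>, at least two thirds of the targets need more than \<open>d\<close> comparisons.\<close>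
  define m where "m = floorlog 3 k - 1"
  have "floorlog 3 k \<noteq> 0"
    using \<open>k > 0\<close> by (simp add: floorlog_eq_zero_iff)
  then have m: "3 ^ m \<le> k" "k < 3 ^ Suc m"
    using floorlog_bounds[OF \<open>k > 0\<close>] by (simp_all add: m_def)
  have "k < 2 ^ (2 * Suc m)"
    using less_le_trans[OF m(2) power_mono[of 3 4 "Suc m"]] by (simp add: power_mult)
  then have "real k < 2 ^ (2 * Suc m)"
    by (metis of_nat_less_iff of_nat_numeral of_nat_power)
  then have "log 2 (real k) < log 2 (2 ^ (2 * Suc m))"
    using \<open>k > 0\<close> by (subst log_less_cancel_iff) auto
  also have "\<dots> = 2 * (real m + 1)"
    by (subst log_pow_cancel) auto
  finally have log_k: "log 2 (real k) < 2 * (real m + 1)" .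
  have "real k * (log 2 (real k) / 6) \<le> (\<Sum>i\<in>S. real (dt_cost T i))"
  proof (cases m)
    case 0
    with log_k have "log 2 (real k) / 6 \<le> 1" by simp
    then have "real k * (log 2 (real k) / 6) \<le> real k * 1"
      by (intro mult_left_mono) auto
    with at_least_k show ?thesis by linarith
  next
    case (Suc d)
    with m(1) have "3 * 3 ^ d \<le> real k"
      by (metis of_nat_le_iff of_nat_numeral of_nat_power power_Suc of_nat_mult)
    have "log 2 (real k) / 6 \<le> 2 / 3 * (real d + 1)"
      using log_k Suc by simp
    then have "real k * (log 2 (real k) / 6) \<le> real k * (2 / 3 * (real d + 1))"
      by (rule mult_left_mono) simp
    also have "\<dots> = 2 / 3 * real k * (real d + 1)"
      by simp
    also have "\<dots> \<le> (real k - 3 ^ d) * (real d + 1)"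
      using \<open>3 * 3 ^ d \<le> real k\<close> by (intro mult_right_mono) simp_all
    also have "\<dots> \<le> (\<Sum>i\<in>S. real (dt_cost T i))"
      using sum_dt_cost_ge[OF S] by (simp add: k_def)
    finally show ?thesis .
  qed
  with at_least_k show ?thesis
    by (simp add: search_cost_bound_def k_def max_def)
qed

lemma expected_cost_return_pmf:
  "expected_cost A (return_pmf i) q = (\<integral>\<^sup>+ T. ennreal (real (dt_cost T i)) \<partial>measure_pmf (A q))"
  by (simp add: expected_cost_def nn_integral_return_pmf)

lemma expected_cost_pmf_of_set:
  assumes "finite S" and "S \<noteq> {}"
  shows "expected_cost A (pmf_of_set S) q =
    (\<Sum>i\<in>S. expected_cost A (return_pmf i) q) / of_nat (card S)"
  using assms
  by (simp add: expected_cost_def nn_integral_pmf_of_set nn_integral_return_pmf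
      nn_integral_divide nn_integral_sum del: sum_ennreal)

lemma sum_expected_cost_return_pmf_ge:
  assumes "correct_search n A" and "set_pmf q \<subseteq> {1..n}" and "n \<ge> 2"
    and "S \<subseteq> {1..n}" and "S \<noteq> {}"
  shows "of_nat (card S) * ennreal (search_cost_bound (card S))
    \<le> (\<Sum>i\<in>S. expected_cost A (return_pmf i) q)"
proof -
  have "of_nat (card S) * ennreal (search_cost_bound (card S))
      = (\<integral>\<^sup>+ T. ennreal (real (card S) * search_cost_bound (card S)) \<partial>measure_pmf (A q))"
    by (simp add: measure_pmf.emeasure_space_1 ennreal_mult' ennreal_of_nat_eq_real_of_nat)
  also have "\<dots> \<le> (\<integral>\<^sup>+ T. (\<Sum>i\<in>S. ennreal (real (dt_cost T i))) \<partial>measure_pmf (A q))"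
  proof (intro nn_integral_mono_AE AE_pmfI)
    fix T assume "T \<in> set_pmf (A q)"
    then have "\<forall>i\<in>{1..n}. dt_output T i = i"
      using assms(1,2) by (auto simp: correct_search_def)
    from sum_dt_cost_ge_search_cost_bound[OF this assms(3-5)]
    show "ennreal (real (card S) * search_cost_bound (card S))
        \<le> (\<Sum>i\<in>S. ennreal (real (dt_cost T i)))"
      by (simp add: sum_ennreal ennreal_leI)
  qed
  also have "\<dots> = (\<Sum>i\<in>S. expected_cost A (return_pmf i) q)"
    by (simp add: expected_cost_return_pmf nn_integral_sum del: sum_ennreal)
  finally show ?thesis .
qed

lemma search_cost_bound_le_expected_cost_pmf_of_set:
  assumes "correct_search n A" and "set_pmf q \<subseteq> {1..n}" and "n \<ge> 2"
    and "S \<subseteq> {1..n}" and "S \<noteq> {}"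
  shows "ennreal (search_cost_bound (card S)) \<le> expected_cost A (pmf_of_set S) q"
proof -
  have "finite S"
    using assms(4) finite_subset by blast
  with assms(5) have "of_nat (card S) \<noteq> (0::ennreal)"
    by simp
  then have "ennreal (search_cost_bound (card S))
      = of_nat (card S) * ennreal (search_cost_bound (card S)) / of_nat (card S)"
    using mult_divide_eq_ennreal[of "of_nat (card S)" "ennreal (search_cost_bound (card S))"]
    by (simp add: mult.commute)
  also have "\<dots> \<le> expected_cost A (pmf_of_set S) q"
    unfolding expected_cost_pmf_of_set[OF \<open>finite S\<close> assms(5)]
    by (intro divide_right_mono_ennreal sum_expected_cost_return_pmf_ge[OF assms])
  finally show ?thesis .
qed

lemma ex_search_cost_bound_le_expected_cost_return_pmf:
  assumes "correct_search n A" and "set_pmf q \<subseteq> {1..n}" and "n \<ge> 2"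
    and "S \<subseteq> {1..n}" and "S \<noteq> {}"
  shows "\<exists>i\<in>S. ennreal (search_cost_bound (card S)) \<le> expected_cost A (return_pmf i) q"
proof -
  have "finite S"
    using assms(4) finite_subset by blast
  let ?cost = "\<lambda>i. expected_cost A (return_pmf i) q"
  obtain i where i: "i \<in> S" "\<forall>j\<in>S. ?cost j \<le> ?cost i"
    using Max_in[of "?cost ` S"] Max_ge[of "?cost ` S"] \<open>finite S\<close> assms(5) by fastforce
  have "of_nat (card S) * ennreal (search_cost_bound (card S)) \<le> (\<Sum>j\<in>S. ?cost j)"
    by (rule sum_expected_cost_return_pmf_ge[OF assms])
  also have "\<dots> \<le> of_nat (card S) * ?cost i"
    using i(2) by (intro sum_bounded_above) blast
  finally have "ennreal (search_cost_bound (card S)) \<le> ?cost i"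
    using \<open>finite S\<close> assms(5) by (subst (asm) ennreal_mult_le_mult_iff) auto
  with i(1) show ?thesis ..
qed

lemma emd_le_coupling:
  assumes "\<gamma> \<in> couplings P Q"
  shows "emd P Q \<le> measure_pmf.expectation \<gamma> (\<lambda>(x, y). \<bar>real x - real y\<bar>)"
  unfolding emd_def
proof (rule cINF_lower[OF _ assms])
  show "bdd_below ((\<lambda>\<gamma>. measure_pmf.expectation \<gamma> (\<lambda>(x, y). \<bar>real x - real y\<bar>)) ` couplings P Q)"
    by (rule bdd_belowI2[where m = 0]) (auto intro: integral_nonneg split: prod.splits)
qed

lemma emd_nonneg: "0 \<le> emd P Q"
proof -
  have "pair_pmf P Q \<in> couplings P Q"
    by (simp add: couplings_def map_fst_pair_pmf map_snd_pair_pmf)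
  then show ?thesis
    unfolding emd_def
    by (intro cINF_greatest) (auto intro: integral_nonneg split: prod.splits)
qed

lemma emd_self [simp]: "emd P P = 0"
proof -
  have "map_pmf (\<lambda>x. (x, x)) P \<in> couplings P P"
    by (simp add: couplings_def pmf.map_comp o_def)
  from emd_le_coupling[OF this] have "emd P P \<le> 0"
    by simp
  with emd_nonneg show ?thesis
    by (rule antisym[rotated])
qed

lemma emd_return_pmf_pmf_of_set_le:
  assumes "i \<in> {1..k}"
  shows "emd (return_pmf i) (pmf_of_set {1..k}) \<le> real k - 1"
proof -
  let ?\<gamma> = "map_pmf (\<lambda>y. (i, y)) (pmf_of_set {1..k})"
  have "?\<gamma> \<in> couplings (return_pmf i) (pmf_of_set {1..k})"
    by (simp add: couplings_def pmf.map_comp o_def map_pmf_const)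
  then have "emd (return_pmf i) (pmf_of_set {1..k})
      \<le> (\<Sum>y\<in>{1..k}. \<bar>real i - real y\<bar>) / real k"
    using emd_le_coupling assms by (fastforce simp: integral_pmf_of_set)
  also have "\<dots> \<le> (\<Sum>y\<in>{1..k}. real k - 1) / real k"
    using assms by (intro divide_right_mono sum_mono) auto
  also have "\<dots> = real k - 1"
    using assms by simp
  finally show ?thesis .
qed

lemma entropy2_pmf_of_set_atLeastAtMost:
  assumes "1 \<le> k" and "k \<le> n"
  shows "entropy2 n (pmf_of_set {1..k}) = log 2 (real k)"
proof -
  have "(\<Sum>i\<in>{1..n}. pmf (pmf_of_set {1..k}) i * log 2 (pmf (pmf_of_set {1..k}) i))
      = (\<Sum>i\<in>{1..k}. 1 / real k * log 2 (1 / real k))"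
    using assms by (intro sum.mono_neutral_cong_right) auto
  also have "\<dots> = - log 2 (real k)"
    using assms by (simp add: log_divide)
  finally show ?thesis
    by (simp add: entropy2_def)
qed

lemma entropy2_return_pmf [simp]: "entropy2 n (return_pmf i) = 0"
  by (simp add: entropy2_def indicator_def)

lemma log_le_search_cost_bound_floor:
  assumes "1 \<le> x"
  shows "log 2 x / 12 \<le> search_cost_bound (nat \<lfloor>x\<rfloor>)"
proof -
  define k where "k = nat \<lfloor>x\<rfloor>"
  have "1 \<le> \<lfloor>x\<rfloor>"
    using assms by simp
  then have "real k = \<lfloor>x\<rfloor>" "x < real k + 1"
    by (simp_all add: k_def)
  with \<open>1 \<le> \<lfloor>x\<rfloor>\<close> have "x \<le> 2 * real k" "1 \<le> real k"
    by linarith+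
  then have "log 2 x \<le> log 2 (2 * real k)"
    using assms by (subst log_le_cancel_iff) auto
  also have "\<dots> = 1 + log 2 (real k)"
    using \<open>1 \<le> real k\<close> by (subst log_mult) auto
  finally have "log 2 x / 12 \<le> 1 \<or> log 2 x / 12 \<le> log 2 (real k) / 6"
    by linarith
  then show ?thesis
    unfolding search_cost_bound_def k_def by (metis le_max_iff_disj)
qed

definition search_instances :: "nat \<Rightarrow> real \<Rightarrow> real \<Rightarrow> (nat pmf \<times> nat pmf) set" where
  "search_instances n h \<eta> = {(p, q). set_pmf p \<subseteq> {1..n} \<and> set_pmf q \<subseteq> {1..n} \<and>
      entropy2 n p \<le> h \<and> emd p q \<le> \<eta>}"

definition worst_expected_cost :: "(nat pmf \<Rightarrow> dtree pmf) \<Rightarrow> nat \<Rightarrow> real \<Rightarrow> real \<Rightarrow> ennreal" where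
  "worst_expected_cost A n h \<eta> =
    (SUP pq\<in>search_instances n h \<eta>. expected_cost A (fst pq) (snd pq))"

lemma expected_cost_le_worst_expected_cost:
  "(p, q) \<in> search_instances n h \<eta> \<Longrightarrow> expected_cost A p q \<le> worst_expected_cost A n h \<eta>"
  unfolding worst_expected_cost_def by (rule SUP_upper2) auto

lemma entropy_le_worst_expected_cost:
  assumes "correct_search n A" and "n \<ge> 2" and "0 \<le> h" and "h \<le> log 2 (real n)" and "0 \<le> \<eta>"
  shows "ennreal (h / 12) \<le> worst_expected_cost A n h \<eta>"
proof -
  define k where "k = nat \<lfloor>2 powr h\<rfloor>"
  have "2 powr h \<le> 2 powr log 2 (real n)"
    using assms(4) by simp
  then have "2 powr h \<le> real n"
    using assms(2) by simp
  moreover have "1 \<le> 2 powr h"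
    using assms(3) by (simp add: ge_one_powr_ge_zero)
  ultimately have k: "1 \<le> k" "k \<le> n" "real k \<le> 2 powr h"
    unfolding k_def by linarith+
  let ?u = "pmf_of_set {1..k}"
  have "log 2 (real k) \<le> log 2 (2 powr h)"
    using k by (subst log_le_cancel_iff) auto
  then have "(?u, ?u) \<in> search_instances n h \<eta>"
    using k assms(5) entropy2_pmf_of_set_atLeastAtMost[OF k(1,2)]
    by (simp add: search_instances_def)
  have "ennreal (h / 12) \<le> ennreal (search_cost_bound k)"
    using log_le_search_cost_bound_floor[OF \<open>1 \<le> 2 powr h\<close>] by (simp add: k_def ennreal_leI)
  also have "\<dots> \<le> expected_cost A ?u ?u"
    using search_cost_bound_le_expected_cost_pmf_of_set[OF assms(1) _ assms(2), of ?u "{1..k}"] k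
    by simp
  also have "\<dots> \<le> worst_expected_cost A n h \<eta>"
    by (rule expected_cost_le_worst_expected_cost) fact
  finally show ?thesis .
qed

lemma prediction_error_le_worst_expected_cost:
  assumes "correct_search n A" and "n \<ge> 2" and "0 \<le> h" and "1 \<le> \<eta>" and "\<eta> \<le> real n"
  shows "ennreal (log 2 \<eta> / 12) \<le> worst_expected_cost A n h \<eta>"
proof -
  define k where "k = nat \<lfloor>\<eta>\<rfloor>"
  have k: "1 \<le> k" "k \<le> n" "real k \<le> \<eta>"
    using assms(4,5) unfolding k_def by linarith+
  let ?u = "pmf_of_set {1..k}"
  \<comment> \<open>The prediction is the same for every target in \<open>{1..k}\<close>, so some target costs at least the average.\<close>
  obtain i where i: "i \<in> {1..k}"
    and cost: "ennreal (search_cost_bound k) \<le> expected_cost A (return_pmf i) ?u"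
    using ex_search_cost_bound_le_expected_cost_return_pmf[OF assms(1) _ assms(2), of ?u "{1..k}"] k
    by auto
  have "(return_pmf i, ?u) \<in> search_instances n h \<eta>"
    using k i assms(3) emd_return_pmf_pmf_of_set_le[OF i] by (auto simp: search_instances_def)
  have "ennreal (log 2 \<eta> / 12) \<le> ennreal (search_cost_bound k)"
    using log_le_search_cost_bound_floor[OF assms(4)] by (simp add: k_def ennreal_leI)
  also note cost
  also have "expected_cost A (return_pmf i) ?u \<le> worst_expected_cost A n h \<eta>"
    by (rule expected_cost_le_worst_expected_cost) fact
  finally show ?thesis .
qed

theorem corollary3p3:
  shows "\<exists>c::real. c > 0 \<and>
    (\<forall>n::nat. \<forall>A. \<forall>h::real. \<forall>\<eta>::real.
      n \<ge> 1 \<longrightarrow> correct_search n A \<longrightarrow>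
      0 \<le> h \<longrightarrow> h \<le> log 2 (real n) \<longrightarrow> 1 \<le> \<eta> \<longrightarrow> \<eta> \<le> real n \<longrightarrow>
      (SUP pq\<in>{(p, q). set_pmf p \<subseteq> {1..n} \<and> set_pmf q \<subseteq> {1..n} \<and>
                        entropy2 n p \<le> h \<and> emd p q \<le> \<eta>}.
          expected_cost A (fst pq) (snd pq))
        \<ge> ennreal (c * (h + log 2 \<eta>)))"
proof (intro exI[of _ "1 / 24"] conjI allI impI)
  fix n :: nat and A h \<eta>
  assume "n \<ge> 1" and A: "correct_search n A" and h: "0 \<le> h" "h \<le> log 2 (real n)"
    and \<eta>: "1 \<le> \<eta>" "\<eta> \<le> real n"
  have "ennreal (1 / 24 * (h + log 2 \<eta>)) \<le> worst_expected_cost A n h \<eta>"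
  proof (cases "n = 1")
    case True
    with h \<eta> show ?thesis by simp
  next
    case False
    with \<open>n \<ge> 1\<close> have "n \<ge> 2" by simp
    have "1 / 24 * (h + log 2 \<eta>) \<le> h / 12 \<or> 1 / 24 * (h + log 2 \<eta>) \<le> log 2 \<eta> / 12"
      by (cases "h \<le> log 2 \<eta>") simp_all
    moreover have "ennreal (h / 12) \<le> worst_expected_cost A n h \<eta>"
      using entropy_le_worst_expected_cost[OF A \<open>n \<ge> 2\<close> h] \<eta> by simp
    moreover have "ennreal (log 2 \<eta> / 12) \<le> worst_expected_cost A n h \<eta>"
      using prediction_error_le_worst_expected_cost[OF A \<open>n \<ge> 2\<close> h(1) \<eta>] .
    ultimately show ?thesis
      by (meson ennreal_leI order_trans)
  qed
  then show "ennreal (1 / 24 * (h + log 2 \<eta>)) \<le> (SUP pq\<in>{(p, q). set_pmf p \<subseteq> {1..n} \<and>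
      set_pmf q \<subseteq> {1..n} \<and> entropy2 n p \<le> h \<and> emd p q \<le> \<eta>}. expected_cost A (fst pq) (snd pq))"
    by (simp add: worst_expected_cost_def search_instances_def)
qed simp

end
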